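(* Let $f$ be an integrable function on $\mathbb R$ with $\tilde f(0)=0$, whose derivative $f'$ exists and is integrable, and suppose there are constants $C_\pm>0$, $L>1$, $\alpha>0$, $\varepsilon>0$ such that \[ |f(y)|\le \frac{C_-}{(-y)^{1+\varepsilon}}\ \text{ for } y\le -L,\qquad |f(y)|\le \frac{C_+}{y^{1+\alpha}}\ \text{ for } y\ge L.\] Then there is a constant $C_\varepsilon>0$ depending on $\varepsilon$ such that \[ |\widetilde{\check f}(-k)|\le C_\varepsilon\,k^{q(\varepsilon)}+O(k)\quad (k\to0^+),\qquad |\widetilde{\check f}(-k)|\le \frac{2^{1+\alpha}C_+}{\alpha(\log k)^\alpha}+O\!\left(\frac1{\sqrt k}\right)\quad (k\to\infty),\] and \[ |\widetilde{\check f}^{\,Th}(-k)|\le \frac{3C_-}{\varepsilon(-\log k)^\varepsilon}+O(k)\quad (k\to0^+),\qquad |\widetilde{\check f}^{\,Th}(-k)|\le \frac{2^{\alpha}C_+}{\alpha(\log k)^\alpha}+O\!\left(\frac1{\sqrt k}\right)\quad (k\to\infty),\] where $q(\varepsilon)=\varepsilon$ if $0<\varepsilon\le1/2$ and $q(\varepsilon)=1/2$ if $\varepsilon>1/2$.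
   Context: Fourier transforms are $\tilde g(p)=(2\pi)^{-1/2}\int_{\mathbb R} g(y)e^{-ipy}\,dy$. Let $x(y)=-\log(1+e^{-y})$. For a function $f$ on $\mathbb R$ and $k\ge0$ define $\widetilde{\check f}(-k)=(2\pi)^{-1/2}\int_{\mathbb R} f(y)\,e^{ikx(y)}\,dy$ and $\widetilde{\check f}^{\,Th}(-k)=(2\pi)^{-1/2}\int_{\mathbb R} f(y)\,e^{-ike^{-y}}\,dy$. *)

theory Defs
  imports "HOL-Analysis.Analysis"
begin

definition FT :: "(real \<Rightarrow> complex) \<Rightarrow> real \<Rightarrow> complex" where
  "FT g p = complex_of_real (1 / sqrt (2 * pi)) *
      (LINT y|lborel. g y * cis (- p * y))"

definition xvar :: "real \<Rightarrow> real" where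
  "xvar y = - ln (1 + exp (- y))"

text \<open>checkFT f k is the quantity written tilde-check-f(-k).\<close>
definition checkFT :: "(real \<Rightarrow> complex) \<Rightarrow> real \<Rightarrow> complex" where
  "checkFT f k = complex_of_real (1 / sqrt (2 * pi)) *
      (LINT y|lborel. f y * cis (k * xvar y))"

text \<open>checkFT_Th f k is the quantity written tilde-check-f^Th(-k).\<close>
definition checkFT_Th :: "(real \<Rightarrow> complex) \<Rightarrow> real \<Rightarrow> complex" where
  "checkFT_Th f k = complex_of_real (1 / sqrt (2 * pi)) *
      (LINT y|lborel. f y * cis (- k * exp (- y)))"

definition qexp :: "real \<Rightarrow> real" where
  "qexp \<epsilon> = (if \<epsilon> \<le> 1/2 then \<epsilon> else 1/2)"

end

theory Submission
  imports Defs "HOL-Probability.Characteristic_Functions" "HOL-Real_Asymp.Real_Asymp"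
begin

(*
  Both transforms integrate f against e^(i k psi(y)), with psi = x or psi = -e^(-y).

  Small k.  As the integral of f vanishes, e^(i k psi) may be replaced by e^(i k psi) - 1,
  which is bounded by min(2, k |psi|).  Split the line at -a: far to the left use the bound
  2 |f| together with the decay of f, elsewhere the bound k |psi| |f|.  For psi = x, where
  |x(y)| <= 2 |y| for y <= -1, the choice a = 1/k gives O(k^q) for any decay exponent q < 1.
  For psi = -e^(-y) choose a = r (-log k) with r^(-eps) = 2: the tail contributes
  4 Cm / (eps (-log k)^eps), the rest is O(k^(1-r)) and hence eventually smaller than
  2 Cm / (eps (-log k)^eps); the normalising factor (2 pi)^(-1/2) < 1/2 halves the sum.

  Large k.  Split at a = -(L + k^(1/(2 eps))) and Y = (log k)/2.  The decay of f bounds both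
  tails, the right one giving the main term 2^alpha Cp / (alpha (log k)^alpha).  On [a, Y]
  integrate by parts once, with w = 1/psi' (w = 1 + e^y for x, w = e^y for -e^(-y)):
  f e^(i k psi) is the derivative of f w e^(i k psi) / (i k) up to (f w)' e^(i k psi) / (i k).
  Since w and |w'| are at most 2 e^Y = 2 sqrt k on [a, Y], this part is O(1/sqrt k).
*)

lemma norm_mult_cis_minus_one_le:
  fixes z :: complex
  shows "norm (z * (cis t - 1)) \<le> 2 * norm z" and "norm (z * (cis t - 1)) \<le> \<bar>t\<bar> * norm z"
  using mult_left_mono[OF iexp_approx2[of t 0], of "norm z"] mult_left_mono[OF iexp_approx1[of t 0], of "norm z"]
  by (simp_all add: norm_mult mult.commute cis_conv_exp)

lemma mult_divide_powr_one_plus: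
  fixes u C q :: real
  assumes "0 < u"
  shows "u * (C / u powr (1 + q)) = C * u powr (-q)"
  using assms by (simp add: powr_add powr_minus divide_inverse)

lemma divide_powr_one_plus_mono:
  fixes C x p p' :: real
  assumes "0 \<le> C" "1 \<le> x" "p \<le> p'"
  shows "C / x powr (1 + p') \<le> C / x powr (1 + p)"
  using assms by (intro divide_left_mono powr_mono) (auto simp: ge_one_powr_ge_zero)

lemma norm_FT_factor_mult_le: "norm (complex_of_real (1 / sqrt (2 * pi)) * z) \<le> norm z / 2"
proof -
  have "2 \<le> sqrt (2 * pi)"
    using pi_gt3 real_sqrt_le_mono[of 4 "2 * pi"] by simp
  have "norm (complex_of_real (1 / sqrt (2 * pi)) * z) = norm z / sqrt (2 * pi)"
    by (simp add: norm_divide)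
  also have "\<dots> \<le> norm z / 2"
    using \<open>2 \<le> sqrt (2 * pi)\<close> by (intro divide_left_mono) auto
  finally show ?thesis .
qed

section \<open>Integrals against a phase\<close>

lemma borel_measurable_cis [measurable]: "cis \<in> borel_measurable borel"
  by (intro borel_measurable_continuous_onI) (simp add: cis_conv_exp continuous_intros)

lemma integrable_mult_cis:
  fixes f :: "real \<Rightarrow> complex"
  assumes "integrable lborel f" "\<phi> \<in> borel_measurable lborel"
  shows "integrable lborel (\<lambda>y. f y * cis (\<phi> y))"
  using assms(1) by (rule Bochner_Integration.integrable_bound) (use assms in \<open>auto simp: norm_mult\<close>)

lemma integrable_mult_cis_minus_one:
  fixes f :: "real \<Rightarrow> complex"
  assumes "integrable lborel f" "\<phi> \<in> borel_measurable lborel"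
  shows "integrable lborel (\<lambda>y. f y * (cis (\<phi> y) - 1))"
  using integrable_mult_cis[OF assms] assms(1) by (simp add: algebra_simps)

lemma integral_mult_cis_mean_zero:
  fixes f :: "real \<Rightarrow> complex"
  assumes f: "integrable lborel f" and mean: "(LBINT y. f y) = 0"
    and \<phi>: "\<phi> \<in> borel_measurable lborel"
  shows "(LBINT y. f y * cis (\<phi> y)) = (LBINT y. f y * (cis (\<phi> y) - 1))"
  using integrable_mult_cis[OF f \<phi>] f mean by (simp add: algebra_simps)

lemma norm_set_integral_le:
  fixes F :: "real \<Rightarrow> 'a::{banach, second_countable_topology}"
  assumes "set_integrable lborel S F" "set_integrable lborel S g"
    and "\<And>y. y \<in> S \<Longrightarrow> norm (F y) \<le> g y"
  shows "norm (LBINT y:S. F y) \<le> (LBINT y:S. g y)"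
  using set_integral_norm_bound[OF assms(1)] set_integral_mono[OF set_integrable_norm[OF assms(1)] assms(2,3)]
  by linarith

lemma norm_set_integral_le_integral:
  fixes F :: "real \<Rightarrow> 'a::{banach, second_countable_topology}"
  assumes F: "F \<in> borel_measurable lborel" and S: "S \<in> sets lborel"
    and g: "integrable lborel g" "\<And>y. 0 \<le> g y"
    and bound: "\<And>y. y \<in> S \<Longrightarrow> norm (F y) \<le> g y"
  shows "set_integrable lborel S F" and "norm (LBINT y:S. F y) \<le> (LBINT y. g y)"
proof -
  have g_S: "set_integrable lborel S g"
    unfolding set_integrable_def by (rule integrable_mult_indicator[OF S g(1)])
  show F_S: "set_integrable lborel S F"
    unfolding set_integrable_def
  proof (rule Bochner_Integration.integrable_bound[OF g_S[unfolded set_integrable_def]])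
    show "AE y in lborel. norm (indicator S y *\<^sub>R F y) \<le> norm (indicator S y *\<^sub>R g y)"
      using bound g(2) by (auto simp: indicator_def)
  qed (use F S in measurable)
  have "norm (LBINT y:S. F y) \<le> (LBINT y:S. g y)"
    by (rule norm_set_integral_le[OF F_S g_S bound])
  also have "\<dots> \<le> (LBINT y. g y)"
    unfolding set_lebesgue_integral_def using S g
    by (intro integral_mono integrable_mult_indicator) (auto simp: indicator_def)
  finally show "norm (LBINT y:S. F y) \<le> (LBINT y. g y)" .
qed

lemma norm_set_integral_le_integral_norm:
  fixes F f :: "real \<Rightarrow> 'a::{banach, second_countable_topology}"
  assumes F: "integrable lborel F" and f: "integrable lborel f" and S: "S \<in> sets lborel"
    and c: "c \<ge> 0" and bound: "\<And>y. y \<in> S \<Longrightarrow> norm (F y) \<le> c * norm (f y)"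
  shows "norm (LBINT y:S. F y) \<le> c * (LBINT y. norm (f y))"
  using norm_set_integral_le_integral(2)[of F S "\<lambda>y. c * norm (f y)"] assms by simp

lemma norm_integral_split2_le:
  fixes G :: "real \<Rightarrow> 'a::{banach, second_countable_topology}"
  assumes G: "integrable lborel G"
  shows "norm (LBINT y. G y) \<le> norm (LBINT y:{..<a}. G y) + norm (LBINT y:{a..}. G y)"
proof -
  have "{..<a} \<union> {a..} = UNIV"
    by auto
  then have "(LBINT y. G y) = (LBINT y:{..<a} \<union> {a..}. G y)"
    by (simp add: set_lebesgue_integral_def)
  also have "\<dots> = (LBINT y:{..<a}. G y) + (LBINT y:{a..}. G y)"
    using G unfolding set_integrable_def
    by (intro set_integral_Un) (auto intro: integrable_mult_indicator simp: set_integrable_def)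
  finally show ?thesis by (simp add: norm_triangle_ineq)
qed

lemma norm_integral_split3_le:
  fixes G :: "real \<Rightarrow> 'a::{banach, second_countable_topology}"
  assumes G: "integrable lborel G" and "a \<le> b"
  shows "norm (LBINT y. G y)
    \<le> norm (LBINT y:{..<a}. G y) + norm (LBINT y:{a..b}. G y) + norm (LBINT y:{b<..}. G y)"
proof -
  have "(LBINT y:{a..}. G y) = (LBINT y:{a..b} \<union> {b<..}. G y)"
    using \<open>a \<le> b\<close> by (simp add: ivl_disj_un)
  also have "\<dots> = (LBINT y:{a..b}. G y) + (LBINT y:{b<..}. G y)"
    by (intro set_integral_Un) (auto intro: integrable_mult_indicator[OF _ G] simp: set_integrable_def)
  finally have "norm (LBINT y:{a..}. G y) \<le> norm (LBINT y:{a..b}. G y) + norm (LBINT y:{b<..}. G y)"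
    by (simp add: norm_triangle_ineq)
  then show ?thesis
    using norm_integral_split2_le[OF G, of a] by linarith
qed

section \<open>Power-law tails\<close>

lemma set_integral_powr_Ici:
  fixes c p :: real
  assumes "c > 0" "p > 0"
  shows "set_integrable lborel {c..} (\<lambda>y. y powr (-1-p))"
    and "(LBINT y:{c..}. y powr (-1-p)) = c powr (-p) / p"
proof -
  have hk: "((\<lambda>y. y powr (-1-p)) has_integral c powr (-p) / p) {c..}"
    using has_integral_powr_to_inf[of "-1-p" c] assms by simp
  then have "(\<lambda>y. y powr (-1-p)) absolutely_integrable_on {c..}"
    by (intro nonnegative_absolutely_integrable_1) (auto simp: integrable_on_def)
  then show int: "set_integrable lborel {c..} (\<lambda>y. y powr (-1-p))"
    unfolding set_integrable_def by (subst (asm) integrable_completion) auto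
  show "(LBINT y:{c..}. y powr (-1-p)) = c powr (-p) / p"
    using set_borel_integral_eq_integral(2)[OF int] hk by (simp add: integral_unique)
qed

lemma norm_set_integral_Ioi_le:
  fixes F :: "real \<Rightarrow> 'a::{banach, second_countable_topology}"
  assumes F: "integrable lborel F" and c: "c > 0" and p: "p > 0"
    and decay: "\<And>y. y > c \<Longrightarrow> norm (F y) \<le> C / y powr (1 + p)"
  shows "norm (LBINT y:{c<..}. F y) \<le> C * c powr (-p) / p"
proof -
  note tail = set_integral_powr_Ici[OF c p]
  have int: "set_integrable lborel {c<..} (\<lambda>y. C * y powr (-1-p))"
    by (intro set_integrable_mult_right set_integrable_subset[OF tail(1)]) auto
  have "norm (LBINT y:{c<..}. F y) \<le> (LBINT y:{c<..}. C * y powr (-1-p))"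
  proof (rule norm_set_integral_le[OF _ int])
    show "set_integrable lborel {c<..} F"
      unfolding set_integrable_def by (rule integrable_mult_indicator[OF _ F]) simp
    fix y assume "y \<in> {c<..}"
    then show "norm (F y) \<le> C * y powr (-1-p)"
      using decay[of y] c by (simp add: divide_inverse flip: powr_minus)
  qed
  also have "(LBINT y:{c<..}. C * y powr (-1-p)) = C * (LBINT y:{c..}. y powr (-1-p))"
    using AE_lborel_singleton[of c]
    by (subst set_integral_cong_set[where B = "{c<..}" and A = "{c..}"])
       (auto simp: set_borel_measurable_def)
  finally show ?thesis using tail(2) by simp
qed

lemma norm_set_integral_Iio_le:
  fixes F :: "real \<Rightarrow> 'a::{banach, second_countable_topology}"
  assumes F: "integrable lborel F" and c: "c > 0" and p: "p > 0"
    and decay: "\<And>y. y < -c \<Longrightarrow> norm (F y) \<le> C / (-y) powr (1 + p)"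
  shows "norm (LBINT y:{..< -c}. F y) \<le> C * c powr (-p) / p"
proof -
  have "(LBINT y:{..< -c}. F y) = (LBINT y:{c<..}. F (-y))"
    by (subst set_integral_reflect) (auto intro!: arg_cong[where f = "\<lambda>S. set_lebesgue_integral _ S _"])
  moreover have "integrable lborel (\<lambda>y. F (-y))"
    using lborel_integrable_real_affine[OF F, of "-1" 0] by simp
  moreover have "norm (F (-y)) \<le> C / y powr (1 + p)" if "y > c" for y
    using decay[of "-y"] that by simp
  ultimately show ?thesis
    using norm_set_integral_Ioi_le[of "\<lambda>y. F (-y)" c p C] c p by simp
qed

lemma set_integral_powr_Icc_le:
  fixes c d q :: real
  assumes cd: "0 < c" "c \<le> d" and q: "0 < q" "q < 1"
  shows "(LBINT y:{c..d}. y powr (-q)) \<le> d powr (1-q) / (1-q)"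
proof -
  have cont: "continuous_on {c..d} (\<lambda>y. y powr (-q))"
    using cd by (intro continuous_intros) auto
  then have "(LBINT y:{c..d}. y powr (-q)) = integral {c..d} (\<lambda>y. y powr (-q))"
    by (intro set_borel_integral_eq_integral borel_integrable_atLeastAtMost')
  also have "\<dots> \<le> integral {0..d} (\<lambda>y. y powr (-q))"
    using cd q cont by (intro integral_subset_le integrable_continuous_interval integrable_on_powr_from_0) auto
  also have "\<dots> = d powr (1-q) / (1-q)"
    using has_integral_powr_from_0[of "-q" d] cd q by (simp add: integral_unique)
  finally show ?thesis .
qed

lemma norm_set_integral_Icc_le:
  fixes F :: "real \<Rightarrow> 'a::{banach, second_countable_topology}"
  assumes F: "integrable lborel F" and cd: "0 < c" "c \<le> d" and q: "0 < q" "q < 1"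
    and bound: "\<And>y. -d \<le> y \<Longrightarrow> y \<le> -c \<Longrightarrow> norm (F y) \<le> C * (-y) powr (-q)"
  shows "norm (LBINT y:{-d..-c}. F y) \<le> C * (d powr (1-q) / (1-q))"
proof -
  have "(LBINT y:{-d..-c}. F y) = (LBINT y:{c..d}. F (-y))"
    by (subst set_integral_reflect) (auto intro!: arg_cong[where f = "\<lambda>S. set_lebesgue_integral _ S _"])
  also have "norm \<dots> \<le> (LBINT y:{c..d}. C * y powr (-q))"
  proof (rule norm_set_integral_le)
    show "set_integrable lborel {c..d} (\<lambda>y. F (-y))"
      using lborel_integrable_real_affine[OF F, of "-1" 0]
      unfolding set_integrable_def by (intro integrable_mult_indicator) auto
    show "set_integrable lborel {c..d} (\<lambda>y. C * y powr (-q))"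
      using cd by (intro borel_integrable_atLeastAtMost' continuous_intros) auto
  next
    fix y assume "y \<in> {c..d}"
    then show "norm (F (-y)) \<le> C * y powr (-q)"
      using bound[of "-y"] by simp
  qed
  also have "\<dots> = C * (LBINT y:{c..d}. y powr (-q))"
    by (rule set_integral_mult_right)
  also have "\<dots> \<le> C * (d powr (1-q) / (1-q))"
  proof (rule mult_left_mono[OF set_integral_powr_Icc_le[OF cd q]])
    have "0 \<le> C * c powr (-q)"
      using bound[of "-c"] cd by (auto intro: order_trans[OF norm_ge_zero])
    then show "0 \<le> C"
      using cd by (simp add: zero_le_mult_iff)
  qed
  finally show ?thesis .
qed

section \<open>Small k\<close>

lemma abs_xvar_le_linear:
  assumes "y \<le> -1"
  shows "\<bar>xvar y\<bar> \<le> 2 * (-y)"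
proof -
  have "2 \<le> exp (-y)"
    using exp_ge_add_one_self[of "-y"] assms by linarith
  then have "1 + exp (-y) \<le> exp (-y) * exp (-y)"
    using mult_right_mono[of 2 "exp (-y)" "exp (-y)"] by linarith
  then have "ln (1 + exp (-y)) \<le> ln (exp (-y) * exp (-y))"
    by (simp add: add_pos_pos)
  then show ?thesis
    by (simp add: xvar_def ln_mult)
qed

lemma abs_xvar_le_const:
  assumes "-L \<le> y"
  shows "\<bar>xvar y\<bar> \<le> ln (1 + exp L)"
  using assms by (simp add: xvar_def add_pos_pos)

lemma norm_integral_cis_xvar_minus_one_le:
  fixes f :: "real \<Rightarrow> complex"
  assumes f: "integrable lborel f" and L: "1 \<le> L" and q: "0 < q" "q < 1"
    and decay: "\<And>y. y \<le> -L \<Longrightarrow> norm (f y) \<le> Cm / (-y) powr (1 + q)"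
    and k: "0 < k" and a: "L \<le> a"
  shows "norm (LBINT y. f y * (cis (k * xvar y) - 1))
    \<le> 2 * Cm * a powr (-q) / q + 2 * k * Cm * (a powr (1-q) / (1-q))
      + k * ln (1 + exp L) * (LBINT y. norm (f y))"
proof -
  define G where "G y = f y * (cis (k * xvar y) - 1)" for y
  have G_int: "integrable lborel G"
    unfolding G_def xvar_def by (intro integrable_mult_cis_minus_one f) measurable
  have G_le: "norm (G y) \<le> k * \<bar>xvar y\<bar> * norm (f y)" for y
    using norm_mult_cis_minus_one_le(2)[of "f y" "k * xvar y"] k unfolding G_def by (simp add: abs_mult)
  have "norm (LBINT y:{..< -a}. G y) \<le> 2 * Cm * a powr (-q) / q"
  proof (rule norm_set_integral_Iio_le[OF G_int _ q(1)])
    fix y assume "y < -a"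
    then have "norm (f y) \<le> Cm / (-y) powr (1 + q)"
      using decay a by simp
    then show "norm (G y) \<le> 2 * Cm / (-y) powr (1 + q)"
      using norm_mult_cis_minus_one_le(1)[of "f y" "k * xvar y"] unfolding G_def by simp
  qed (use a L in simp)
  moreover have "norm (LBINT y:{-a..-L}. G y) \<le> 2 * k * Cm * (a powr (1-q) / (1-q))"
  proof (rule norm_set_integral_Icc_le[OF G_int _ a q])
    fix y assume y: "-a \<le> y" "y \<le> -L"
    have "norm (G y) \<le> k * \<bar>xvar y\<bar> * norm (f y)"
      by (rule G_le)
    also have "\<dots> \<le> k * (2 * (-y)) * (Cm / (-y) powr (1 + q))"
      using abs_xvar_le_linear[of y] decay[of y] y L k
      by (intro mult_mono mult_left_mono) (auto simp: mult_nonneg_nonpos intro: order_trans[OF norm_ge_zero])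
    also have "\<dots> = 2 * k * ((-y) * (Cm / (-y) powr (1 + q)))"
      by simp
    also have "\<dots> = 2 * k * Cm * (-y) powr (-q)"
      by (subst mult_divide_powr_one_plus) (use y L in auto)
    finally show "norm (G y) \<le> 2 * k * Cm * (-y) powr (-q)" .
  qed (use L in simp)
  moreover have "norm (LBINT y:{-L<..}. G y) \<le> k * ln (1 + exp L) * (LBINT y. norm (f y))"
  proof (rule norm_set_integral_le_integral_norm[OF G_int f])
    fix y assume "y \<in> {-L<..}"
    then have "k * \<bar>xvar y\<bar> * norm (f y) \<le> k * ln (1 + exp L) * norm (f y)"
      using abs_xvar_le_const[of L y] k by (intro mult_right_mono mult_left_mono) auto
    then show "norm (G y) \<le> k * ln (1 + exp L) * norm (f y)"
      using G_le[of y] by linarith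
  qed (use k in auto)
  ultimately show ?thesis
    using norm_integral_split3_le[OF G_int, of "-a" "-L"] a unfolding G_def by simp
qed

lemma checkFT_small_k:
  fixes f :: "real \<Rightarrow> complex"
  assumes f: "integrable lborel f" and mean: "(LBINT y. f y) = 0"
    and Cm: "0 < Cm" and L: "1 \<le> L" and q: "0 < q" "q < 1"
    and decay: "\<And>y. y \<le> -L \<Longrightarrow> norm (f y) \<le> Cm / (-y) powr (1 + q)"
  shows "\<exists>C>0. \<exists>M. \<forall>\<^sub>F k in at_right 0. norm (checkFT f k) \<le> C * k powr q + M * k"
proof (intro exI conjI)
  define C where "C = 2 * Cm / q + 2 * Cm / (1 - q)"
  show "0 < C"
    unfolding C_def using Cm q by (intro add_pos_pos divide_pos_pos) auto
  have "\<forall>\<^sub>F k in at_right 0. 0 < k \<and> L \<le> 1 / k"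
    by (intro eventually_conj; real_asymp)
  then show "\<forall>\<^sub>F k in at_right 0.
      norm (checkFT f k) \<le> C * k powr q + ln (1 + exp L) * (LBINT y. norm (f y)) * k"
  proof (rule eventually_mono, elim conjE)
    fix k :: real assume k: "0 < k" and kL: "L \<le> 1 / k"
    have xvar_meas: "(\<lambda>y. k * xvar y) \<in> borel_measurable lborel"
      unfolding xvar_def by measurable
    have "(1 / k) powr (-q) = k powr q" and "k * (1 / k) powr (1 - q) = k powr q"
      using k by (simp_all add: powr_divide powr_minus powr_diff divide_inverse inverse_powr)
    then have "2 * Cm * (1 / k) powr (-q) / q + 2 * k * Cm * ((1 / k) powr (1 - q) / (1 - q))
        = C * k powr q"
      unfolding C_def by (simp add: field_simps)
    then have "norm (LBINT y. f y * (cis (k * xvar y) - 1))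
        \<le> C * k powr q + ln (1 + exp L) * (LBINT y. norm (f y)) * k"
      using norm_integral_cis_xvar_minus_one_le[OF f L q decay k kL] by (simp add: ac_simps)
    moreover have "norm (checkFT f k) \<le> norm (LBINT y. f y * (cis (k * xvar y) - 1)) / 2"
      unfolding checkFT_def integral_mult_cis_mean_zero[OF f mean xvar_meas]
      by (rule norm_FT_factor_mult_le)
    ultimately show "norm (checkFT f k) \<le> C * k powr q + ln (1 + exp L) * (LBINT y. norm (f y)) * k"
      using norm_ge_zero[of "LBINT y. f y * (cis (k * xvar y) - 1)"] by linarith
  qed
qed

lemma norm_integral_cis_exp_minus_one_le:
  fixes f :: "real \<Rightarrow> complex"
  assumes f: "integrable lborel f" and L: "0 < L" and \<epsilon>: "0 < \<epsilon>"
    and decay: "\<And>y. y \<le> -L \<Longrightarrow> norm (f y) \<le> Cm / (-y) powr (1 + \<epsilon>)"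
    and k: "0 \<le> k" and b: "L \<le> b"
  shows "norm (LBINT y. f y * (cis (- k * exp (-y)) - 1))
    \<le> 2 * Cm * b powr (-\<epsilon>) / \<epsilon> + k * exp b * (LBINT y. norm (f y))"
proof -
  define G where "G y = f y * (cis (- k * exp (-y)) - 1)" for y
  have G_int: "integrable lborel G"
    unfolding G_def by (intro integrable_mult_cis_minus_one f) measurable
  have "norm (LBINT y:{..< -b}. G y) \<le> 2 * Cm * b powr (-\<epsilon>) / \<epsilon>"
  proof (rule norm_set_integral_Iio_le[OF G_int _ \<epsilon>])
    fix y assume "y < -b"
    then have "norm (f y) \<le> Cm / (-y) powr (1 + \<epsilon>)"
      using decay b by simp
    then show "norm (G y) \<le> 2 * Cm / (-y) powr (1 + \<epsilon>)"
      using norm_mult_cis_minus_one_le(1)[of "f y" "- k * exp (-y)"] unfolding G_def by simp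
  qed (use b L in simp)
  moreover have "norm (LBINT y:{-b..}. G y) \<le> k * exp b * (LBINT y. norm (f y))"
  proof (rule norm_set_integral_le_integral_norm[OF G_int f])
    fix y assume "y \<in> {-b..}"
    then have "\<bar>- k * exp (-y)\<bar> \<le> k * exp b"
      using k by (simp add: mult_left_mono)
    then show "norm (G y) \<le> k * exp b * norm (f y)"
      using norm_mult_cis_minus_one_le(2)[of "f y" "- k * exp (-y)"] unfolding G_def
      by (meson mult_right_mono norm_ge_zero order_trans)
  qed (use k in auto)
  ultimately show ?thesis
    using norm_integral_split2_le[OF G_int, of "-b"] unfolding G_def by simp
qed

lemma norm_integral_cis_exp_minus_one_le_log:
  fixes f :: "real \<Rightarrow> complex"
  assumes f: "integrable lborel f" and L: "0 < L" and \<epsilon>: "0 < \<epsilon>"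
    and decay: "\<And>y. y \<le> -L \<Longrightarrow> norm (f y) \<le> Cm / (-y) powr (1 + \<epsilon>)"
    and k: "0 < k" "k < 1" and r: "0 < r" and kL: "L \<le> r * (- ln k)"
  shows "norm (LBINT y. f y * (cis (- k * exp (-y)) - 1))
    \<le> 2 * Cm * r powr (-\<epsilon>) / (\<epsilon> * (- ln k) powr \<epsilon>) + k powr (1 - r) * (LBINT y. norm (f y))"
proof -
  have "norm (LBINT y. f y * (cis (- k * exp (-y)) - 1))
      \<le> 2 * Cm * (r * (- ln k)) powr (-\<epsilon>) / \<epsilon> + k * exp (r * (- ln k)) * (LBINT y. norm (f y))"
    using k kL by (intro norm_integral_cis_exp_minus_one_le[OF f L \<epsilon> decay]) auto
  also have "(r * (- ln k)) powr (-\<epsilon>) = r powr (-\<epsilon>) / (- ln k) powr \<epsilon>"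
    by (subst powr_mult) (use r k in \<open>auto simp: powr_minus divide_inverse\<close>)
  also have "2 * Cm * (r powr (-\<epsilon>) / (- ln k) powr \<epsilon>) / \<epsilon>
      = 2 * Cm * r powr (-\<epsilon>) / (\<epsilon> * (- ln k) powr \<epsilon>)"
    by simp
  also have "k * exp (r * (- ln k)) = k powr (1 - r)"
    using k by (simp add: powr_def exp_diff exp_minus divide_inverse algebra_simps)
  finally show ?thesis .
qed

lemma checkFT_Th_small_k:
  fixes f :: "real \<Rightarrow> complex"
  assumes f: "integrable lborel f" and mean: "(LBINT y. f y) = 0"
    and Cm: "0 < Cm" and L: "0 < L" and \<epsilon>: "0 < \<epsilon>"
    and decay: "\<And>y. y \<le> -L \<Longrightarrow> norm (f y) \<le> Cm / (-y) powr (1 + \<epsilon>)"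
  shows "\<exists>M. \<forall>\<^sub>F k in at_right 0.
    norm (checkFT_Th f k) \<le> 3 * Cm / (\<epsilon> * (- ln k) powr \<epsilon>) + M * k"
proof (intro exI)
  define N where "N = (LBINT y. norm (f y))"
  define r where "r = 2 powr (-1 / \<epsilon>)"
  have r: "0 < r" "r < 1" "r powr (-\<epsilon>) = 2"
    unfolding r_def using \<epsilon> by (simp_all add: powr_less_one powr_powr)
  have "((\<lambda>k. k powr (1 - r) * (- ln k) powr \<epsilon> * N) \<longlongrightarrow> 0) (at_right 0)"
    using r \<epsilon> by real_asymp
  then have small: "\<forall>\<^sub>F k in at_right 0. k powr (1 - r) * (- ln k) powr \<epsilon> * N < 2 * Cm / \<epsilon>"
    using Cm \<epsilon> by (intro order_tendstoD) auto
  have "\<forall>\<^sub>F k in at_right 0. 0 < k \<and> k < 1 \<and> L \<le> r * (- ln k)"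
    using r by (intro eventually_conj; real_asymp)
  with small show "\<forall>\<^sub>F k in at_right 0.
      norm (checkFT_Th f k) \<le> 3 * Cm / (\<epsilon> * (- ln k) powr \<epsilon>) + 0 * k"
  proof (eventually_elim, elim conjE)
    fix k :: real
    assume small_k: "k powr (1 - r) * (- ln k) powr \<epsilon> * N < 2 * Cm / \<epsilon>"
      and k: "0 < k" "k < 1" and kL: "L \<le> r * (- ln k)"
    have T: "0 < (- ln k) powr \<epsilon>"
      using k by simp
    have phase_meas: "(\<lambda>y. - k * exp (-y)) \<in> borel_measurable lborel"
      by measurable
    have "k powr (1 - r) * N = k powr (1 - r) * (- ln k) powr \<epsilon> * N / (- ln k) powr \<epsilon>"
      using T by simp
    also have "\<dots> \<le> 2 * Cm / \<epsilon> / (- ln k) powr \<epsilon>"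
      using small_k T by (intro divide_right_mono) auto
    finally have remainder: "k powr (1 - r) * N \<le> 2 * Cm / (\<epsilon> * (- ln k) powr \<epsilon>)"
      by simp
    have "norm (LBINT y. f y * (cis (- k * exp (-y)) - 1))
        \<le> 2 * Cm * 2 / (\<epsilon> * (- ln k) powr \<epsilon>) + k powr (1 - r) * N"
      using norm_integral_cis_exp_minus_one_le_log[OF f L \<epsilon> decay k r(1) kL, unfolded r(3)]
      unfolding N_def .
    also have "\<dots> \<le> 2 * Cm * 2 / (\<epsilon> * (- ln k) powr \<epsilon>) + 2 * Cm / (\<epsilon> * (- ln k) powr \<epsilon>)"
      using remainder by simp
    also have "\<dots> = 6 * Cm / (\<epsilon> * (- ln k) powr \<epsilon>)"
      by (simp add: add_divide_distrib [symmetric])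
    finally have "norm (LBINT y. f y * (cis (- k * exp (-y)) - 1)) \<le> 6 * Cm / (\<epsilon> * (- ln k) powr \<epsilon>)" .
    moreover have "norm (checkFT_Th f k) \<le> norm (LBINT y. f y * (cis (- k * exp (-y)) - 1)) / 2"
      unfolding checkFT_Th_def integral_mult_cis_mean_zero[OF f mean phase_meas]
      by (rule norm_FT_factor_mult_le)
    ultimately show "norm (checkFT_Th f k) \<le> 3 * Cm / (\<epsilon> * (- ln k) powr \<epsilon>) + 0 * k"
      by simp
  qed
qed

section \<open>Large k\<close>

lemma has_vector_derivative_cis:
  assumes "(\<phi> has_real_derivative d) (at y)"
  shows "((\<lambda>y. cis (\<phi> y)) has_vector_derivative \<i> * cis (\<phi> y) * d) (at y)"
  using assms by (auto intro!: derivative_eq_intros simp: has_vector_derivative_complex_iff)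

lemma has_vector_derivative_weighted_cis:
  fixes f f' :: "real \<Rightarrow> complex" and w w' \<psi> :: "real \<Rightarrow> real"
  assumes f: "(f has_vector_derivative f' y) (at y)" and w: "(w has_real_derivative w' y) (at y)"
    and \<psi>: "(\<psi> has_real_derivative 1 / w y) (at y)" and "w y \<noteq> 0" "k \<noteq> 0"
  shows "((\<lambda>y. f y * w y * cis (k * \<psi> y) / (\<i> * k)) has_vector_derivative
      f y * cis (k * \<psi> y) + (f' y * w y + f y * w' y) * cis (k * \<psi> y) / (\<i> * k)) (at y)"
proof -
  have "((\<lambda>y. f y * w y * cis (k * \<psi> y) / (\<i> * k)) has_vector_derivative
      (f y * w y * (\<i> * cis (k * \<psi> y) * (k * (1 / w y)))
        + (f y * w' y + f' y * w y) * cis (k * \<psi> y)) / (\<i> * k)) (at y)"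
    using f w \<psi> by (auto intro!: derivative_eq_intros has_vector_derivative_cis)
  moreover have "(f y * w y * (\<i> * cis (k * \<psi> y) * (k * (1 / w y)))
        + (f y * w' y + f' y * w y) * cis (k * \<psi> y)) / (\<i> * k)
      = f y * cis (k * \<psi> y) + (f' y * w y + f y * w' y) * cis (k * \<psi> y) / (\<i> * k)"
    using assms(4,5) by (simp add: field_simps)
  ultimately show ?thesis
    by simp
qed

lemma set_integral_FTC_Icc:
  fixes G g :: "real \<Rightarrow> 'a::euclidean_space"
  assumes "a \<le> b" and G: "\<And>y. a \<le> y \<Longrightarrow> y \<le> b \<Longrightarrow> (G has_vector_derivative g y) (at y)"
    and g: "set_integrable lborel {a..b} g"
  shows "(LBINT y:{a..b}. g y) = G b - G a"
proof -
  have "(g has_integral G b - G a) {a..b}"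
    using assms(1) by (rule fundamental_theorem_of_calculus) (auto intro: has_vector_derivative_at_within G)
  then show ?thesis
    using set_borel_integral_eq_integral(2)[OF g] by (simp add: integral_unique)
qed

lemma norm_set_integral_weighted_cis_le:
  fixes f f' :: "real \<Rightarrow> complex" and w w' \<psi> :: "real \<Rightarrow> real"
  assumes k: "0 < k" and f_int: "integrable lborel f" and f'_int: "integrable lborel f'"
    and cont: "continuous_on UNIV w" "continuous_on UNIV w'" "continuous_on UNIV \<psi>"
    and B: "0 \<le> B" "\<And>y. a \<le> y \<Longrightarrow> y \<le> Y \<Longrightarrow> \<bar>w y\<bar> \<le> B \<and> \<bar>w' y\<bar> \<le> B"
  defines "H \<equiv> \<lambda>y. (f' y * w y + f y * w' y) * cis (k * \<psi> y) / (\<i> * k)"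
  shows "set_integrable lborel {a..Y} H"
    and "norm (LBINT y:{a..Y}. H y) \<le> B / k * ((LBINT y. norm (f' y)) + (LBINT y. norm (f y)))"
proof -
  note [measurable] = borel_measurable_integrable[OF f_int] borel_measurable_integrable[OF f'_int]
    cont[THEN borel_measurable_continuous_onI]
  have H_meas: "H \<in> borel_measurable lborel"
    unfolding H_def by measurable
  have H_bound: "norm (H y) \<le> B / k * (norm (f' y) + norm (f y))" if "y \<in> {a..Y}" for y
  proof -
    have "norm (H y) = norm (f' y * w y + f y * w' y) / k"
      unfolding H_def using k by (simp add: norm_mult norm_divide)
    also have "\<dots> \<le> (norm (f' y) * B + norm (f y) * B) / k"
      using B(2)[of y] that k
      by (intro divide_right_mono order_trans[OF norm_triangle_ineq] add_mono)
        (auto simp: norm_mult intro: mult_left_mono)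
    finally show ?thesis
      by (simp add: algebra_simps add_divide_distrib)
  qed
  have g_int: "integrable lborel (\<lambda>y. B / k * (norm (f' y) + norm (f y)))"
    using f_int f'_int by auto
  show "set_integrable lborel {a..Y} H"
    and "norm (LBINT y:{a..Y}. H y) \<le> B / k * ((LBINT y. norm (f' y)) + (LBINT y. norm (f y)))"
    using norm_set_integral_le_integral[of H "{a..Y}" "\<lambda>y. B / k * (norm (f' y) + norm (f y))",
        OF H_meas _ g_int _ H_bound] B(1) k f_int f'_int
    by auto
qed

lemma norm_set_integral_cis_phase_le:
  fixes f f' :: "real \<Rightarrow> complex" and w w' \<psi> :: "real \<Rightarrow> real"
  assumes k: "0 < k" and aY: "a \<le> Y"
    and f_deriv: "\<And>y. (f has_vector_derivative f' y) (at y)"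
    and f_int: "integrable lborel f" and f'_int: "integrable lborel f'"
    and w_deriv: "\<And>y. (w has_real_derivative w' y) (at y)" and w'_cont: "continuous_on UNIV w'"
    and \<psi>_deriv: "\<And>y. (\<psi> has_real_derivative 1 / w y) (at y)" and w_pos: "\<And>y. 0 < w y"
    and B: "\<And>y. a \<le> y \<Longrightarrow> y \<le> Y \<Longrightarrow> w y \<le> B \<and> \<bar>w' y\<bar> \<le> B"
  shows "norm (LBINT y:{a..Y}. f y * cis (k * \<psi> y))
    \<le> (norm (f Y) * w Y + norm (f a) * w a + B * ((LBINT y. norm (f' y)) + (LBINT y. norm (f y)))) / k"
proof -
  define F where "F y = f y * cis (k * \<psi> y)" for y
  define G where "G y = f y * w y * cis (k * \<psi> y) / (\<i> * k)" for y
  define H where "H y = (f' y * w y + f y * w' y) * cis (k * \<psi> y) / (\<i> * k)" for y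
  have G_deriv: "(G has_vector_derivative F y + H y) (at y)" for y
    unfolding F_def G_def H_def
    using w_pos[of y] k by (intro has_vector_derivative_weighted_cis f_deriv w_deriv \<psi>_deriv) auto
  have cont: "continuous_on UNIV w" "continuous_on UNIV \<psi>"
    using w_deriv \<psi>_deriv by (meson DERIV_isCont continuous_at_imp_continuous_on)+
  note [measurable] = borel_measurable_continuous_onI[OF cont(2)]
  have "integrable lborel F"
    unfolding F_def by (intro integrable_mult_cis f_int) measurable
  then have F_S: "set_integrable lborel {a..Y} F"
    unfolding set_integrable_def by (intro integrable_mult_indicator) simp
  note H = norm_set_integral_weighted_cis_le[OF k f_int f'_int cont(1) w'_cont cont(2), of B a Y,
      folded H_def]
  have "B \<ge> 0"
    using B[OF order_refl aY] by linarith
  then have H_S: "set_integrable lborel {a..Y} H"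
    and H_le: "norm (LBINT y:{a..Y}. H y) \<le> B / k * ((LBINT y. norm (f' y)) + (LBINT y. norm (f y)))"
    using H B w_pos by (auto simp: abs_of_pos)
  have "(LBINT y:{a..Y}. F y) + (LBINT y:{a..Y}. H y) = G Y - G a"
    using set_integral_FTC_Icc[OF aY G_deriv set_integral_add(1)[OF F_S H_S]]
    by (simp add: set_integral_add(2)[OF F_S H_S])
  then have F_eq: "(LBINT y:{a..Y}. F y) = (G Y - G a) - (LBINT y:{a..Y}. H y)"
    by (simp add: eq_diff_eq)
  have "norm (LBINT y:{a..Y}. F y) \<le> norm (G Y) + norm (G a) + norm (LBINT y:{a..Y}. H y)"
    unfolding F_eq
    using norm_triangle_ineq4[of "G Y - G a" "LBINT y:{a..Y}. H y"] norm_triangle_ineq4[of "G Y" "G a"]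
    by linarith
  moreover have "norm (G y) = norm (f y) * w y / k" for y
    unfolding G_def using k w_pos[of y] by (simp add: norm_mult norm_divide)
  ultimately show ?thesis
    using H_le k unfolding F_def by (simp add: add_divide_distrib algebra_simps)
qed

lemma norm_set_integral_cis_phase_exp_le:
  fixes f f' :: "real \<Rightarrow> complex" and w w' \<psi> :: "real \<Rightarrow> real"
  assumes k: "0 < k" and aY: "a \<le> Y" and Y: "0 \<le> Y"
    and f_deriv: "\<And>y. (f has_vector_derivative f' y) (at y)"
    and f_int: "integrable lborel f" and f'_int: "integrable lborel f'"
    and w_deriv: "\<And>y. (w has_real_derivative w' y) (at y)" and w'_cont: "continuous_on UNIV w'"
    and \<psi>_deriv: "\<And>y. (\<psi> has_real_derivative 1 / w y) (at y)" and w_pos: "\<And>y. 0 < w y"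
    and w_le: "\<And>y. w y \<le> 1 + exp y" and w'_le: "\<And>y. \<bar>w' y\<bar> \<le> exp y"
    and fa: "norm (f a) \<le> Cm" and fY: "norm (f Y) \<le> Cp"
  shows "norm (LBINT y:{a..Y}. f y * cis (k * \<psi> y))
    \<le> 2 * exp Y * (Cp + Cm + (LBINT y. norm (f' y)) + (LBINT y. norm (f y))) / k"
proof -
  have w_bound: "w y \<le> 2 * exp Y \<and> \<bar>w' y\<bar> \<le> 2 * exp Y" if "y \<le> Y" for y
  proof -
    have "exp y \<le> exp Y" "1 \<le> exp Y"
      using that Y by auto
    then show ?thesis
      using w_le[of y] w'_le[of y] by linarith
  qed
  have "norm (f Y) * w Y \<le> Cp * (2 * exp Y)"
    using fY w_bound[of Y] w_pos[of Y] by (intro mult_mono) (auto intro: order_trans[OF norm_ge_zero])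
  moreover have "norm (f a) * w a \<le> Cm * (2 * exp Y)"
    using fa w_bound[of a] w_pos[of a] aY by (intro mult_mono) (auto intro: order_trans[OF norm_ge_zero])
  ultimately have "norm (f Y) * w Y + norm (f a) * w a
        + 2 * exp Y * ((LBINT y. norm (f' y)) + (LBINT y. norm (f y)))
      \<le> 2 * exp Y * (Cp + Cm + (LBINT y. norm (f' y)) + (LBINT y. norm (f y)))"
    by (simp add: algebra_simps)
  moreover have "norm (LBINT y:{a..Y}. f y * cis (k * \<psi> y))
      \<le> (norm (f Y) * w Y + norm (f a) * w a
        + 2 * exp Y * ((LBINT y. norm (f' y)) + (LBINT y. norm (f y)))) / k"
    using w_bound
    by (intro norm_set_integral_cis_phase_le[OF k aY f_deriv f_int f'_int w_deriv w'_cont \<psi>_deriv w_pos])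
      auto
  ultimately show ?thesis
    using k by (meson divide_right_mono less_imp_le order_trans)
qed

lemma norm_integral_cis_phase_le:
  fixes f f' :: "real \<Rightarrow> complex" and w w' \<psi> :: "real \<Rightarrow> real"
  assumes k: "0 < k"
    and f_deriv: "\<And>y. (f has_vector_derivative f' y) (at y)"
    and f_int: "integrable lborel f" and f'_int: "integrable lborel f'"
    and w_deriv: "\<And>y. (w has_real_derivative w' y) (at y)" and w'_cont: "continuous_on UNIV w'"
    and \<psi>_deriv: "\<And>y. (\<psi> has_real_derivative 1 / w y) (at y)" and w_pos: "\<And>y. 0 < w y"
    and w_le: "\<And>y. w y \<le> 1 + exp y" and w'_le: "\<And>y. \<bar>w' y\<bar> \<le> exp y"
    and Cm: "0 \<le> Cm" and Cp: "0 \<le> Cp" and L: "1 \<le> L" and \<alpha>: "0 < \<alpha>" and \<epsilon>: "0 < \<epsilon>"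
    and decay_minus: "\<And>y. y \<le> -L \<Longrightarrow> norm (f y) \<le> Cm / (-y) powr (1 + \<epsilon>)"
    and decay_plus: "\<And>y. L \<le> y \<Longrightarrow> norm (f y) \<le> Cp / y powr (1 + \<alpha>)"
    and a: "a \<le> -L" and Y: "L \<le> Y"
  shows "norm (LBINT y. f y * cis (k * \<psi> y))
    \<le> Cm * (-a) powr (-\<epsilon>) / \<epsilon>
      + 2 * exp Y * (Cp + Cm + (LBINT y. norm (f' y)) + (LBINT y. norm (f y))) / k
      + Cp * Y powr (-\<alpha>) / \<alpha>"
proof -
  define F where "F y = f y * cis (k * \<psi> y)" for y
  have "continuous_on UNIV \<psi>"
    using \<psi>_deriv by (meson DERIV_isCont continuous_at_imp_continuous_on)
  note [measurable] = borel_measurable_continuous_onI[OF this]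
  have F_int: "integrable lborel F"
    unfolding F_def by (intro integrable_mult_cis f_int) measurable
  have norm_F: "norm (F y) = norm (f y)" for y
    unfolding F_def by (simp add: norm_mult)
  have "norm (LBINT y:{..<a}. F y) \<le> Cm * (-a) powr (-\<epsilon>) / \<epsilon>"
    using norm_set_integral_Iio_le[OF F_int _ \<epsilon>, of "-a" Cm] a L decay_minus norm_F by simp
  moreover have "norm (f a) \<le> Cm" and "norm (f Y) \<le> Cp"
    using decay_minus[OF a] decay_plus[OF Y] a Y L
      divide_powr_one_plus_mono[OF Cm, of "-a" "-1" \<epsilon>] divide_powr_one_plus_mono[OF Cp, of Y "-1" \<alpha>] \<alpha> \<epsilon>
    by auto
  then have "norm (LBINT y:{a..Y}. F y)
      \<le> 2 * exp Y * (Cp + Cm + (LBINT y. norm (f' y)) + (LBINT y. norm (f y))) / k"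
    unfolding F_def using a Y L
    by (intro norm_set_integral_cis_phase_exp_le[OF k _ _ f_deriv f_int f'_int w_deriv w'_cont
          \<psi>_deriv w_pos w_le w'_le]) auto
  moreover have "norm (LBINT y:{Y<..}. F y) \<le> Cp * Y powr (-\<alpha>) / \<alpha>"
    using Y L decay_plus norm_F by (intro norm_set_integral_Ioi_le[OF F_int _ \<alpha>]) auto
  ultimately show ?thesis
    using norm_integral_split3_le[OF F_int, of a Y] a Y L unfolding F_def by simp
qed

lemma powr_neg_le_inverse_sqrt:
  fixes k \<epsilon> L :: real
  assumes "0 < k" "0 < \<epsilon>" "0 \<le> L"
  shows "(L + k powr (1 / (2 * \<epsilon>))) powr (-\<epsilon>) \<le> 1 / sqrt k"
proof -
  have "(L + k powr (1 / (2 * \<epsilon>))) powr (-\<epsilon>) \<le> (k powr (1 / (2 * \<epsilon>))) powr (-\<epsilon>)"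
    using assms by (intro powr_mono2') auto
  also have "\<dots> = 1 / sqrt k"
    using assms by (simp add: powr_powr powr_minus_divide powr_half_sqrt flip: powr_minus)
  finally show ?thesis .
qed

lemma exp_half_ln_divide:
  fixes k :: real
  assumes "0 < k"
  shows "exp (ln k / 2) / k = 1 / sqrt k"
proof -
  have "exp (ln k / 2) = k powr (1 / 2)"
    using assms by (simp add: powr_def)
  also have "\<dots> = sqrt k"
    using assms by (simp add: powr_half_sqrt)
  finally show ?thesis
    using sqrt_divide_self_eq[of k] assms by (simp add: inverse_eq_divide)
qed

lemma eventually_norm_integral_cis_phase_le:
  fixes f f' :: "real \<Rightarrow> complex" and w w' \<psi> :: "real \<Rightarrow> real"
  assumes f_deriv: "\<And>y. (f has_vector_derivative f' y) (at y)"
    and f_int: "integrable lborel f" and f'_int: "integrable lborel f'"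
    and w_deriv: "\<And>y. (w has_real_derivative w' y) (at y)" and w'_cont: "continuous_on UNIV w'"
    and \<psi>_deriv: "\<And>y. (\<psi> has_real_derivative 1 / w y) (at y)" and w_pos: "\<And>y. 0 < w y"
    and w_le: "\<And>y. w y \<le> 1 + exp y" and w'_le: "\<And>y. \<bar>w' y\<bar> \<le> exp y"
    and Cm: "0 \<le> Cm" and Cp: "0 \<le> Cp" and L: "1 \<le> L" and \<alpha>: "0 < \<alpha>" and \<epsilon>: "0 < \<epsilon>"
    and decay_minus: "\<And>y. y \<le> -L \<Longrightarrow> norm (f y) \<le> Cm / (-y) powr (1 + \<epsilon>)"
    and decay_plus: "\<And>y. L \<le> y \<Longrightarrow> norm (f y) \<le> Cp / y powr (1 + \<alpha>)"
  shows "\<exists>M. \<forall>\<^sub>F k in at_top.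
    norm (LBINT y. f y * cis (k * \<psi> y)) \<le> 2 powr \<alpha> * Cp / (\<alpha> * (ln k) powr \<alpha>) + M / sqrt k"
proof (intro exI)
  define N where "N = Cp + Cm + (LBINT y. norm (f' y)) + (LBINT y. norm (f y))"
  have "\<forall>\<^sub>F k in at_top. 0 < k \<and> L \<le> ln k / 2"
    by (intro eventually_conj; real_asymp)
  then show "\<forall>\<^sub>F k in at_top.
      norm (LBINT y. f y * cis (k * \<psi> y)) \<le> 2 powr \<alpha> * Cp / (\<alpha> * (ln k) powr \<alpha>)
        + (Cm / \<epsilon> + 2 * N) / sqrt k"
  proof (rule eventually_mono, elim conjE)
    fix k :: real assume k: "0 < k" and kL: "L \<le> ln k / 2"
    define a where "a = - (L + k powr (1 / (2 * \<epsilon>)))"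
    have left: "Cm * (-a) powr (-\<epsilon>) / \<epsilon> \<le> Cm * (1 / sqrt k) / \<epsilon>"
      unfolding a_def minus_minus using powr_neg_le_inverse_sqrt[of k \<epsilon> L] k \<epsilon> L Cm
      by (intro divide_right_mono mult_left_mono) auto
    have middle: "2 * exp (ln k / 2) * N / k = 2 * N * (1 / sqrt k)"
      unfolding exp_half_ln_divide[OF k, symmetric] by simp
    have "0 \<le> ln k"
      using kL L by linarith
    then have "(ln k / 2) powr (-\<alpha>) = 2 powr \<alpha> / (ln k) powr \<alpha>"
      by (simp add: powr_minus powr_divide)
    then have right: "Cp * (ln k / 2) powr (-\<alpha>) / \<alpha> = 2 powr \<alpha> * Cp / (\<alpha> * (ln k) powr \<alpha>)"
      by (simp add: ac_simps)
    have "norm (LBINT y. f y * cis (k * \<psi> y))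
        \<le> Cm * (-a) powr (-\<epsilon>) / \<epsilon> + 2 * exp (ln k / 2) * N / k
          + Cp * (ln k / 2) powr (-\<alpha>) / \<alpha>"
      using kL unfolding N_def a_def
      by (intro norm_integral_cis_phase_le[OF k f_deriv f_int f'_int w_deriv w'_cont \<psi>_deriv w_pos
            w_le w'_le Cm Cp L \<alpha> \<epsilon> decay_minus decay_plus]) auto
    also have "\<dots> \<le> Cm * (1 / sqrt k) / \<epsilon> + 2 * N * (1 / sqrt k) + 2 powr \<alpha> * Cp / (\<alpha> * (ln k) powr \<alpha>)"
      using left unfolding middle right by linarith
    also have "\<dots> = 2 powr \<alpha> * Cp / (\<alpha> * (ln k) powr \<alpha>) + (Cm / \<epsilon> + 2 * N) / sqrt k"
      by (simp add: add_divide_distrib)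
    finally show "norm (LBINT y. f y * cis (k * \<psi> y)) \<le> 2 powr \<alpha> * Cp / (\<alpha> * (ln k) powr \<alpha>)
        + (Cm / \<epsilon> + 2 * N) / sqrt k" .
  qed
qed

lemma has_real_derivative_xvar: "(xvar has_real_derivative 1 / (1 + exp y)) (at y)"
proof -
  have "(xvar has_real_derivative exp (-y) / (1 + exp (-y))) (at y)"
    unfolding xvar_def by (auto intro!: derivative_eq_intros simp: add_pos_pos)
  moreover have "exp (-y) / (1 + exp (-y)) = 1 / (1 + exp y)"
    by (simp add: exp_minus field_simps)
  ultimately show ?thesis
    by simp
qed

lemma checkFT_large_k:
  fixes f f' :: "real \<Rightarrow> complex"
  assumes f_deriv: "\<And>y. (f has_vector_derivative f' y) (at y)"
    and f_int: "integrable lborel f" and f'_int: "integrable lborel f'"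
    and Cm: "0 \<le> Cm" and Cp: "0 \<le> Cp" and L: "1 \<le> L" and \<alpha>: "0 < \<alpha>" and \<epsilon>: "0 < \<epsilon>"
    and decay_minus: "\<And>y. y \<le> -L \<Longrightarrow> norm (f y) \<le> Cm / (-y) powr (1 + \<epsilon>)"
    and decay_plus: "\<And>y. L \<le> y \<Longrightarrow> norm (f y) \<le> Cp / y powr (1 + \<alpha>)"
  shows "\<exists>M. \<forall>\<^sub>F k in at_top.
    norm (checkFT f k) \<le> 2 powr \<alpha> * Cp / (\<alpha> * (ln k) powr \<alpha>) + M / sqrt k"
proof -
  have checkFT_le: "norm (checkFT f k) \<le> norm (LBINT y. f y * cis (k * xvar y))" for k
    using norm_FT_factor_mult_le[of "LBINT y. f y * cis (k * xvar y)"]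
      norm_ge_zero[of "LBINT y. f y * cis (k * xvar y)"]
    unfolding checkFT_def by linarith
  have "((\<lambda>y. 1 + exp y) has_real_derivative exp y) (at y)" for y :: real
    by (auto intro!: derivative_eq_intros)
  then have "\<exists>M. \<forall>\<^sub>F k in at_top.
      norm (LBINT y. f y * cis (k * xvar y)) \<le> 2 powr \<alpha> * Cp / (\<alpha> * (ln k) powr \<alpha>) + M / sqrt k"
    by (rule eventually_norm_integral_cis_phase_le[OF f_deriv f_int f'_int _
          continuous_on_exp[OF continuous_on_id] has_real_derivative_xvar _ _ _
          Cm Cp L \<alpha> \<epsilon> decay_minus decay_plus])
      (auto simp: add_pos_pos)
  then obtain M where "\<forall>\<^sub>F k in at_top.
      norm (LBINT y. f y * cis (k * xvar y)) \<le> 2 powr \<alpha> * Cp / (\<alpha> * (ln k) powr \<alpha>) + M / sqrt k"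
    by blast
  then have "\<forall>\<^sub>F k in at_top. norm (checkFT f k) \<le> 2 powr \<alpha> * Cp / (\<alpha> * (ln k) powr \<alpha>) + M / sqrt k"
    by eventually_elim (rule order_trans[OF checkFT_le])
  then show ?thesis ..
qed

lemma checkFT_Th_large_k:
  fixes f f' :: "real \<Rightarrow> complex"
  assumes f_deriv: "\<And>y. (f has_vector_derivative f' y) (at y)"
    and f_int: "integrable lborel f" and f'_int: "integrable lborel f'"
    and Cm: "0 \<le> Cm" and Cp: "0 \<le> Cp" and L: "1 \<le> L" and \<alpha>: "0 < \<alpha>" and \<epsilon>: "0 < \<epsilon>"
    and decay_minus: "\<And>y. y \<le> -L \<Longrightarrow> norm (f y) \<le> Cm / (-y) powr (1 + \<epsilon>)"
    and decay_plus: "\<And>y. L \<le> y \<Longrightarrow> norm (f y) \<le> Cp / y powr (1 + \<alpha>)"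
  shows "\<exists>M. \<forall>\<^sub>F k in at_top.
    norm (checkFT_Th f k) \<le> 2 powr \<alpha> * Cp / (\<alpha> * (ln k) powr \<alpha>) + M / sqrt k"
proof -
  have phase_deriv: "((\<lambda>y. - exp (-y)) has_real_derivative 1 / exp y) (at y)" for y
    by (auto intro!: derivative_eq_intros simp: exp_minus divide_inverse)
  have checkFT_Th_le: "norm (checkFT_Th f k) \<le> norm (LBINT y. f y * cis (k * - exp (-y)))" for k
    using norm_FT_factor_mult_le[of "LBINT y. f y * cis (k * - exp (-y))"]
      norm_ge_zero[of "LBINT y. f y * cis (k * - exp (-y))"]
    unfolding checkFT_Th_def mult_minus_left mult_minus_right by linarith
  have "\<exists>M. \<forall>\<^sub>F k in at_top.
      norm (LBINT y. f y * cis (k * - exp (-y))) \<le> 2 powr \<alpha> * Cp / (\<alpha> * (ln k) powr \<alpha>) + M / sqrt k"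
    by (rule eventually_norm_integral_cis_phase_le[OF f_deriv f_int f'_int DERIV_exp
          continuous_on_exp[OF continuous_on_id] phase_deriv _ _ _
          Cm Cp L \<alpha> \<epsilon> decay_minus decay_plus])
      auto
  then obtain M where "\<forall>\<^sub>F k in at_top.
      norm (LBINT y. f y * cis (k * - exp (-y))) \<le> 2 powr \<alpha> * Cp / (\<alpha> * (ln k) powr \<alpha>) + M / sqrt k"
    by blast
  then have "\<forall>\<^sub>F k in at_top. norm (checkFT_Th f k) \<le> 2 powr \<alpha> * Cp / (\<alpha> * (ln k) powr \<alpha>) + M / sqrt k"
    by eventually_elim (rule order_trans[OF checkFT_Th_le])
  then show ?thesis ..
qed

theorem lemma2:
  fixes f f' :: "real \<Rightarrow> complex"
    and Cm Cp L \<alpha> \<epsilon> :: real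
  assumes f_int: "integrable lborel f"
    and FT0: "FT f 0 = 0"
    and f_deriv: "\<And>y. (f has_vector_derivative f' y) (at y)"
    and f'_int: "integrable lborel f'"
    and Cm_pos: "Cm > 0" and Cp_pos: "Cp > 0"
    and L_gt: "L > 1" and \<alpha>_pos: "\<alpha> > 0" and \<epsilon>_pos: "\<epsilon> > 0"
    and decay_minus: "\<And>y. y \<le> - L \<Longrightarrow> norm (f y) \<le> Cm / (- y) powr (1 + \<epsilon>)"
    and decay_plus: "\<And>y. y \<ge> L \<Longrightarrow> norm (f y) \<le> Cp / y powr (1 + \<alpha>)"
  shows
    "(\<exists>C>0. \<exists>M. \<forall>\<^sub>F k in at_right 0.
        norm (checkFT f k) \<le> C * k powr (qexp \<epsilon>) + M * k)
   \<and> (\<exists>M. \<forall>\<^sub>F k in at_top.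
        norm (checkFT f k) \<le> 2 powr (1 + \<alpha>) * Cp / (\<alpha> * (ln k) powr \<alpha>) + M / sqrt k)
   \<and> (\<exists>M. \<forall>\<^sub>F k in at_right 0.
        norm (checkFT_Th f k) \<le> 3 * Cm / (\<epsilon> * (- ln k) powr \<epsilon>) + M * k)
   \<and> (\<exists>M. \<forall>\<^sub>F k in at_top.
        norm (checkFT_Th f k) \<le> 2 powr \<alpha> * Cp / (\<alpha> * (ln k) powr \<alpha>) + M / sqrt k)"
proof -
  have mean: "(LBINT y. f y) = 0"
    using FT0 by (simp add: FT_def)
  have L: "1 \<le> L" "0 < L" and Cm: "0 \<le> Cm" and Cp: "0 \<le> Cp"
    using L_gt Cm_pos Cp_pos by auto
  have q: "0 < qexp \<epsilon>" "qexp \<epsilon> < 1" "qexp \<epsilon> \<le> \<epsilon>"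
    using \<epsilon>_pos by (auto simp: qexp_def)
  have decay_q: "norm (f y) \<le> Cm / (-y) powr (1 + qexp \<epsilon>)" if "y \<le> -L" for y
    using decay_minus[OF that] divide_powr_one_plus_mono[OF Cm _ q(3), of "-y"] that L by simp
  obtain M where "\<forall>\<^sub>F k in at_top.
      norm (checkFT f k) \<le> 2 powr \<alpha> * Cp / (\<alpha> * (ln k) powr \<alpha>) + M / sqrt k"
    using checkFT_large_k[OF f_deriv f_int f'_int Cm Cp L(1) \<alpha>_pos \<epsilon>_pos decay_minus decay_plus] by blast
  moreover have "2 powr \<alpha> * Cp / (\<alpha> * (ln k) powr \<alpha>) \<le> 2 powr (1 + \<alpha>) * Cp / (\<alpha> * (ln k) powr \<alpha>)" for k
    using Cp \<alpha>_pos by (intro divide_right_mono mult_right_mono powr_mono) auto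
  ultimately have "\<forall>\<^sub>F k in at_top.
      norm (checkFT f k) \<le> 2 powr (1 + \<alpha>) * Cp / (\<alpha> * (ln k) powr \<alpha>) + M / sqrt k"
    by (auto elim!: eventually_mono intro: order_trans add_right_mono)
  then show ?thesis
    using checkFT_small_k[OF f_int mean Cm_pos L(1) q(1,2) decay_q]
      checkFT_Th_small_k[OF f_int mean Cm_pos L(2) \<epsilon>_pos decay_minus]
      checkFT_Th_large_k[OF f_deriv f_int f'_int Cm Cp L(1) \<alpha>_pos \<epsilon>_pos decay_minus decay_plus]
    by blast
qed
end
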